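(* Let $n\in\mathbb N$ and $X=C_2\sqcup L_n$, and let $a$ be the generator of the subgroup $C_2$ of $X$ (identified with $\langle a\rangle$). Then $\lambda(X)$ is a finite commutative Boolean semigroup, its set of idempotents $E(\lambda(X))$ equals $\lambda(X)\setminus\{a\}$, and $\mathcal E*a=a$ for every idempotent $\mathcal E$ of $\lambda(X)$.
   Context: $\lambda(X)$ is the set of maximal linked upfamilies on $X$ (an upfamily is a family of nonempty subsets closed under supersets; linked means any two members intersect; maximal linked means not properly contained in another linked upfamily), with each $x\in X$ identified with $\langle x\rangle=\{A\subset X:x\in A\}$ and operation $\mathcal A*\mathcal B=\big\langle \bigcup_{a\in A} a*B_a : A\in\mathcal A,\ \{B_a\}_{a\in A}\subset\mathcal B\big\rangle$, where $\langle\mathcal C\rangle=\{A\subset X:\exists C\in\mathcal C,\ C\subset A\}$. $C_2=\{1,-1\}$ under multiplication; $L_n=\{0,\dots,n-1\}$ with operation $\min$. For semigroups $(X,* )$, $(Y,\star)$, the disjoint ordered union $X\sqcup Y$ is the disjoint union with operation $x\circ y=x*y$ for $x,y\in X$; $x\circ y=x$ if $x\in X,y\in Y$; $x\circ y=y$ if $x\in Y,y\in X$; $x\circ y=x\star y$ for $x,y\in Y$. A semigroup is Boolean if $x^3=x$ for all $x$. *)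

theory Defs
  imports Main
begin

definition upfamily :: "'a set \<Rightarrow> 'a set set \<Rightarrow> bool" where
  "upfamily X \<A> \<longleftrightarrow> (\<forall>A\<in>\<A>. A \<subseteq> X \<and> A \<noteq> {}) \<and>
     (\<forall>A\<in>\<A>. \<forall>B. A \<subseteq> B \<and> B \<subseteq> X \<longrightarrow> B \<in> \<A>)"

definition linked :: "'a set set \<Rightarrow> bool" where
  "linked \<A> \<longleftrightarrow> (\<forall>A\<in>\<A>. \<forall>B\<in>\<A>. A \<inter> B \<noteq> {})"

definition maximal_linked :: "'a set \<Rightarrow> 'a set set \<Rightarrow> bool" where
  "maximal_linked X \<A> \<longleftrightarrow> upfamily X \<A> \<and> linked \<A> \<and>
     (\<forall>\<B>. upfamily X \<B> \<and> linked \<B> \<and> \<A> \<subseteq> \<B> \<longrightarrow> \<B> = \<A>)"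

definition lam :: "'a set \<Rightarrow> 'a set set set" where
  "lam X = {\<A>. maximal_linked X \<A>}"

definition gen :: "'a set \<Rightarrow> 'a set set \<Rightarrow> 'a set set" where
  "gen X \<C> = {A. A \<subseteq> X \<and> (\<exists>C\<in>\<C>. C \<subseteq> A)}"

text \<open>The principal ultrafilter identified with x.\<close>
definition principal :: "'a set \<Rightarrow> 'a \<Rightarrow> 'a set set" where
  "principal X x = {A. A \<subseteq> X \<and> x \<in> A}"

definition ext_op :: "'a set \<Rightarrow> ('a \<Rightarrow> 'a \<Rightarrow> 'a) \<Rightarrow> 'a set set \<Rightarrow> 'a set set \<Rightarrow> 'a set set" where
  "ext_op X f \<A> \<B> = gen X {(\<Union>a\<in>A. f a ` (Bs a)) | A Bs. A \<in> \<A> \<and> (\<forall>a\<in>A. Bs a \<in> \<B>)}"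

text \<open>The semigroup X = C_2 \<sqcup> L_n: C_2 = {1,-1} (as Inl), L_n = {0..n-1} with min (as Inr).\<close>
definition XC2L :: "nat \<Rightarrow> (int + nat) set" where
  "XC2L n = Inl ` {1, -1} \<union> Inr ` {..<n}"

fun opC2L :: "int + nat \<Rightarrow> int + nat \<Rightarrow> int + nat" where
  "opC2L (Inl x) (Inl y) = Inl (x * y)"
| "opC2L (Inl x) (Inr y) = Inl x"
| "opC2L (Inr x) (Inl y) = Inl y"
| "opC2L (Inr x) (Inr y) = Inr (min x y)"

end

theory Submission
  imports Defs
begin

(* The extended product has a pointwise description: C \<in> A * B iff the set of
   x \<in> X whose left fibre {y. x y \<in> C} lies in B belongs to A.

   For X = C_2 \<sqcup> L_n let a = <-1>.  Every maximal linked family A \<noteq> a contains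
   X - {-1}, so for z \<in> C_2 the fibre of z over C lies in A iff z \<in> C.  With this,
   A * A = A for A \<noteq> a, A * B \<subseteq> B * A for A, B \<noteq> a (the heart of the proof,
   using a well-chosen element of L_n), and E * a = a for E \<noteq> a; while
   a * a = <1> \<noteq> a and <1> * a = a.  Since the products are maximal linked,
   inclusions between them are equalities, and the theorem follows. *)


section \<open>Upfamilies and maximal linked upfamilies\<close>

lemma up_mono: "upfamily X AA \<Longrightarrow> A \<in> AA \<Longrightarrow> A \<subseteq> B \<Longrightarrow> B \<subseteq> X \<Longrightarrow> B \<in> AA"
  unfolding upfamily_def by blast

lemma up_sub: "upfamily X AA \<Longrightarrow> A \<in> AA \<Longrightarrow> A \<subseteq> X"
  unfolding upfamily_def by blast

lemma up_ne: "upfamily X AA \<Longrightarrow> A \<in> AA \<Longrightarrow> A \<noteq> {}"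
  unfolding upfamily_def by blast

lemma linkedD: "linked AA \<Longrightarrow> A \<in> AA \<Longrightarrow> B \<in> AA \<Longrightarrow> A \<inter> B \<noteq> {}"
  unfolding linked_def by blast

lemma ml_up: "maximal_linked X AA \<Longrightarrow> upfamily X AA"
  unfolding maximal_linked_def by blast

lemma ml_linked: "maximal_linked X AA \<Longrightarrow> linked AA"
  unfolding maximal_linked_def by blast

lemma ml_max:
  assumes "maximal_linked X AA" "upfamily X BB" "linked BB" "AA \<subseteq> BB"
  shows "BB = AA"
  using assms unfolding maximal_linked_def by blast

lemma finite_lam:
  assumes "finite X"
  shows "finite (lam X)"
proof (rule finite_subset)
  show "lam X \<subseteq> Pow (Pow X)"
    unfolding lam_def maximal_linked_def upfamily_def by blast
  show "finite (Pow (Pow X))"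
    using assms by simp
qed

lemma ml_meets_all:
  assumes ml: "maximal_linked X AA" and D: "D \<subseteq> X" "D \<noteq> {}"
    and meets: "\<forall>A\<in>AA. A \<inter> D \<noteq> {}"
  shows "D \<in> AA"
proof -
  let ?BB = "AA \<union> {E. D \<subseteq> E \<and> E \<subseteq> X}"
  have up: "upfamily X AA" and lk: "linked AA"
    using ml by (auto dest: ml_up ml_linked)
  have "upfamily X ?BB"
    using up D unfolding upfamily_def by auto
  moreover have "linked ?BB"
    unfolding linked_def
  proof (intro ballI)
    fix A B
    assume "A \<in> ?BB" "B \<in> ?BB"
    then show "A \<inter> B \<noteq> {}"
      using linkedD[OF lk] meets D(2) by blast
  qed
  ultimately have "?BB = AA"
    using ml_max[OF ml] by blast
  then show ?thesis
    using D by blast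
qed

lemma ml_compl_iff:
  assumes ml: "maximal_linked X AA" and D: "D \<subseteq> X" and X: "X \<noteq> {}"
  shows "X - D \<in> AA \<longleftrightarrow> D \<notin> AA"
proof -
  have up: "upfamily X AA"
    using ml by (rule ml_up)
  have "D \<in> AA \<or> X - D \<in> AA"
  proof (rule ccontr)
    assume none: "\<not> (D \<in> AA \<or> X - D \<in> AA)"
    text \<open>A member of AA disjoint from E would put X - E into AA.\<close>
    have meets: "A \<inter> E \<noteq> {}" if A: "A \<in> AA" and E: "X - E \<notin> AA" for A E
    proof
      assume "A \<inter> E = {}"
      then have "A \<subseteq> X - E"
        using up_sub[OF up A] by blast
      then show False
        using up_mono[OF up A _ Diff_subset] E by blast
    qed
    have "X - (X - D) = D"
      using D by blast
    then have "\<forall>A\<in>AA. A \<inter> (X - D) \<noteq> {}"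
      using meets[of _ "X - D"] none by simp
    moreover have "\<forall>A\<in>AA. A \<inter> D \<noteq> {}"
      using meets none by blast
    ultimately show False
      using ml_meets_all[OF ml D] ml_meets_all[OF ml Diff_subset] none X D by blast
  qed
  moreover have "\<not> (D \<in> AA \<and> X - D \<in> AA)"
    using linkedD[OF ml_linked[OF ml]] by blast
  ultimately show ?thesis
    by blast
qed

lemma ml_intro:
  assumes up: "upfamily X AA" and lk: "linked AA"
    and decides: "\<And>D. D \<subseteq> X \<Longrightarrow> D \<in> AA \<or> X - D \<in> AA"
  shows "maximal_linked X AA"
  unfolding maximal_linked_def
proof (intro conjI allI impI up lk)
  fix BB
  assume BB: "upfamily X BB \<and> linked BB \<and> AA \<subseteq> BB"
  have "B \<in> AA" if B: "B \<in> BB" for B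
  proof (rule ccontr)
    assume "B \<notin> AA"
    then have "X - B \<in> BB"
      using decides[of B] up_sub B BB by blast
    then show False
      using linkedD[of BB B "X - B"] B BB by blast
  qed
  then show "BB = AA"
    using BB by blast
qed


section \<open>Principal families\<close>

lemma principal_ml:
  assumes "x \<in> X"
  shows "maximal_linked X (principal X x)"
proof (rule ml_intro)
  show "upfamily X (principal X x)" and "linked (principal X x)"
    using assms unfolding upfamily_def linked_def principal_def by blast+
  show "D \<in> principal X x \<or> X - D \<in> principal X x" if "D \<subseteq> X" for D
    using that assms unfolding principal_def by blast
qed

lemma singleton_mem_iff:
  assumes ml: "maximal_linked X AA" and x: "x \<in> X"
  shows "{x} \<in> AA \<longleftrightarrow> AA = principal X x"
proof
  assume sx: "{x} \<in> AA"
  have "AA \<subseteq> principal X x"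
    using linkedD[OF ml_linked[OF ml] _ sx] up_sub[OF ml_up[OF ml]]
    unfolding principal_def by blast
  then show "AA = principal X x"
    using ml_max[OF ml ml_up[OF principal_ml[OF x]] ml_linked[OF principal_ml[OF x]]] by simp
next
  assume "AA = principal X x"
  then show "{x} \<in> AA"
    using x unfolding principal_def by blast
qed

lemma ml_co_singleton:
  assumes ml: "maximal_linked X AA" and x: "x \<in> X" and ne: "AA \<noteq> principal X x"
  shows "{x} \<notin> AA" and "X - {x} \<in> AA"
proof -
  show nx: "{x} \<notin> AA"
    using singleton_mem_iff[OF ml x] ne by blast
  show "X - {x} \<in> AA"
    using ml_compl_iff[OF ml _] x nx by blast
qed


section \<open>The extended operation\<close>

definition lfibre :: "'a set \<Rightarrow> ('a \<Rightarrow> 'a \<Rightarrow> 'a) \<Rightarrow> 'a \<Rightarrow> 'a set \<Rightarrow> 'a set" where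
  "lfibre X f x C = {y\<in>X. f x y \<in> C}"

lemma lfibre_sub: "lfibre X f x C \<subseteq> X"
  unfolding lfibre_def by blast

lemma lfibre_mono: "C \<subseteq> D \<Longrightarrow> lfibre X f x C \<subseteq> lfibre X f x D"
  unfolding lfibre_def by blast

lemma ext_op_iff:
  "C \<in> ext_op X f AA BB \<longleftrightarrow>
     C \<subseteq> X \<and> (\<exists>A Bs. A \<in> AA \<and> (\<forall>a\<in>A. Bs a \<in> BB) \<and> (\<Union>a\<in>A. f a ` Bs a) \<subseteq> C)"
  unfolding ext_op_def gen_def by blast

lemma ext_op_char:
  assumes upA: "upfamily X AA" and upB: "upfamily X BB"
  shows "C \<in> ext_op X f AA BB \<longleftrightarrow> C \<subseteq> X \<and> {x\<in>X. lfibre X f x C \<in> BB} \<in> AA"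
proof
  assume "C \<in> ext_op X f AA BB"
  then obtain A Bs where C: "C \<subseteq> X" and A: "A \<in> AA" and Bs: "\<forall>a\<in>A. Bs a \<in> BB"
    and sub: "(\<Union>a\<in>A. f a ` Bs a) \<subseteq> C"
    unfolding ext_op_iff by blast
  have "lfibre X f a C \<in> BB" if a: "a \<in> A" for a
  proof -
    have "Bs a \<subseteq> lfibre X f a C"
      using sub a up_sub[OF upB] Bs unfolding lfibre_def by blast
    then show ?thesis
      using up_mono[OF upB _ _ lfibre_sub] Bs a by blast
  qed
  then have "A \<subseteq> {x\<in>X. lfibre X f x C \<in> BB}"
    using up_sub[OF upA A] by blast
  then show "C \<subseteq> X \<and> {x\<in>X. lfibre X f x C \<in> BB} \<in> AA"
    using C up_mono[OF upA A] by blast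
next
  let ?T = "{x\<in>X. lfibre X f x C \<in> BB}"
  assume h: "C \<subseteq> X \<and> ?T \<in> AA"
  text \<open>Witnesses: the set ?T itself, with the fibres over C as the family Bs.\<close>
  have "(\<Union>a\<in>?T. f a ` lfibre X f a C) \<subseteq> C"
    unfolding lfibre_def by blast
  then show "C \<in> ext_op X f AA BB"
    unfolding ext_op_iff using h by (intro conjI exI[of _ ?T] exI[of _ "\<lambda>a. lfibre X f a C"]) auto
qed

lemma ext_op_up:
  assumes upA: "upfamily X AA" and upB: "upfamily X BB"
  shows "upfamily X (ext_op X f AA BB)"
  unfolding upfamily_def
proof (intro conjI ballI allI impI)
  fix C
  assume "C \<in> ext_op X f AA BB"
  then have C: "C \<subseteq> X" "{x\<in>X. lfibre X f x C \<in> BB} \<in> AA"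
    using ext_op_char[OF upA upB] by auto
  then obtain x where "lfibre X f x C \<in> BB"
    using up_ne[OF upA] by blast
  then have "lfibre X f x C \<noteq> {}"
    using up_ne[OF upB] by blast
  then show "C \<subseteq> X" "C \<noteq> {}"
    using C unfolding lfibre_def by blast+
next
  fix C D
  assume "C \<in> ext_op X f AA BB" and D: "C \<subseteq> D \<and> D \<subseteq> X"
  then have T: "{x\<in>X. lfibre X f x C \<in> BB} \<in> AA"
    using ext_op_char[OF upA upB] by auto
  have "{x\<in>X. lfibre X f x C \<in> BB} \<subseteq> {x\<in>X. lfibre X f x D \<in> BB}"
    using up_mono[OF upB _ lfibre_mono lfibre_sub] D by blast
  then show "D \<in> ext_op X f AA BB"
    using up_mono[OF upA T] ext_op_char[OF upA upB] D by blast
qed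

lemma ext_op_ml:
  assumes mlA: "maximal_linked X AA" and mlB: "maximal_linked X BB"
    and X: "X \<noteq> {}" and closed: "\<forall>x\<in>X. \<forall>y\<in>X. f x y \<in> X"
  shows "maximal_linked X (ext_op X f AA BB)"
proof -
  have upA: "upfamily X AA" and upB: "upfamily X BB"
    using mlA mlB by (auto dest: ml_up)
  let ?T = "\<lambda>C. {x\<in>X. lfibre X f x C \<in> BB}"
  note char = ext_op_char[OF upA upB]
  show ?thesis
  proof (rule ml_intro)
    show "upfamily X (ext_op X f AA BB)"
      using upA upB by (rule ext_op_up)
    show "linked (ext_op X f AA BB)"
      unfolding linked_def
    proof (intro ballI)
      fix C C'
      assume "C \<in> ext_op X f AA BB" "C' \<in> ext_op X f AA BB"
      then obtain x where "lfibre X f x C \<in> BB" "lfibre X f x C' \<in> BB"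
        using linkedD[OF ml_linked[OF mlA]] char by blast
      then show "C \<inter> C' \<noteq> {}"
        using linkedD[OF ml_linked[OF mlB]] unfolding lfibre_def by blast
    qed
    fix D
    assume D: "D \<subseteq> X"
    text \<open>Taking fibres commutes with complements in X, and so does ?T.\<close>
    have "lfibre X f x (X - D) = X - lfibre X f x D" if "x \<in> X" for x
      using closed that unfolding lfibre_def by blast
    then have "?T (X - D) = X - ?T D"
      using ml_compl_iff[OF mlB lfibre_sub X] by auto
    moreover have "?T D \<in> AA \<or> X - ?T D \<in> AA"
      using ml_compl_iff[OF mlA _ X, of "?T D"] by blast
    ultimately show "D \<in> ext_op X f AA BB \<or> X - D \<in> ext_op X f AA BB"
      using char[of D] char[of "X - D"] D by auto
  qed
qed

lemma ext_op_assoc: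
  assumes upA: "upfamily X AA" and upB: "upfamily X BB" and upC: "upfamily X CC"
    and closed: "\<forall>x\<in>X. \<forall>y\<in>X. f x y \<in> X"
    and assoc: "\<forall>x\<in>X. \<forall>y\<in>X. \<forall>z\<in>X. f (f x y) z = f x (f y z)"
  shows "ext_op X f (ext_op X f AA BB) CC = ext_op X f AA (ext_op X f BB CC)"
proof (rule set_eqI)
  fix C
  let ?T = "{x\<in>X. lfibre X f x C \<in> CC}"
  have fibre_T: "lfibre X f u ?T = {y\<in>X. lfibre X f y (lfibre X f u C) \<in> CC}"
    if u: "u \<in> X" for u
  proof -
    have "lfibre X f (f u y) C = lfibre X f y (lfibre X f u C)" if y: "y \<in> X" for y
      using assoc closed u y unfolding lfibre_def by auto
    then show ?thesis
      using closed u unfolding lfibre_def[of X f u] by auto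
  qed
  have "C \<in> ext_op X f (ext_op X f AA BB) CC \<longleftrightarrow>
      C \<subseteq> X \<and> {u\<in>X. lfibre X f u ?T \<in> BB} \<in> AA"
    using ext_op_char[OF ext_op_up[OF upA upB] upC] ext_op_char[OF upA upB, of ?T] by auto
  also have "{u\<in>X. lfibre X f u ?T \<in> BB} = {u\<in>X. lfibre X f u C \<in> ext_op X f BB CC}"
  proof (rule Collect_cong)
    fix u
    show "(u \<in> X \<and> lfibre X f u ?T \<in> BB) \<longleftrightarrow> (u \<in> X \<and> lfibre X f u C \<in> ext_op X f BB CC)"
      using fibre_T[of u] ext_op_char[OF upB upC, of "lfibre X f u C"] lfibre_sub[of X f u C] by auto
  qed
  also have "(C \<subseteq> X \<and> {u\<in>X. lfibre X f u C \<in> ext_op X f BB CC} \<in> AA) \<longleftrightarrow>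
      C \<in> ext_op X f AA (ext_op X f BB CC)"
    using ext_op_char[OF upA ext_op_up[OF upB upC]] by simp
  finally show "C \<in> ext_op X f (ext_op X f AA BB) CC \<longleftrightarrow> C \<in> ext_op X f AA (ext_op X f BB CC)" .
qed

lemma ext_op_principal_right:
  assumes up: "upfamily X AA" and x: "x \<in> X"
  shows "C \<in> ext_op X f AA (principal X x) \<longleftrightarrow> C \<subseteq> X \<and> {y\<in>X. f y x \<in> C} \<in> AA"
proof -
  have "{y\<in>X. lfibre X f y C \<in> principal X x} = {y\<in>X. f y x \<in> C}"
    using x unfolding lfibre_def principal_def by blast
  then show ?thesis
    using ext_op_char[OF up ml_up[OF principal_ml[OF x]]] by simp
qed

lemma principal_comm:
  assumes up: "upfamily X AA" and x: "x \<in> X" and comm: "\<forall>u\<in>X. \<forall>v\<in>X. f u v = f v u"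
  shows "ext_op X f AA (principal X x) = ext_op X f (principal X x) AA"
proof (rule set_eqI)
  fix C
  have "{y\<in>X. f y x \<in> C} = lfibre X f x C"
    using x comm unfolding lfibre_def by auto
  then show "C \<in> ext_op X f AA (principal X x) \<longleftrightarrow> C \<in> ext_op X f (principal X x) AA"
    using ext_op_principal_right[OF up x] ext_op_char[OF ml_up[OF principal_ml[OF x]] up] x
    unfolding principal_def by auto
qed

lemma principal_mult:
  assumes "x \<in> X" "y \<in> X" "f x y \<in> X"
  shows "ext_op X f (principal X x) (principal X y) = principal X (f x y)"
  using ext_op_principal_right[OF ml_up[OF principal_ml] assms(2)] assms
  unfolding principal_def by auto


section \<open>The semigroup X = C_2 \<sqcup> L_n\<close>

lemma XC2L_mem: "x \<in> XC2L n \<longleftrightarrow> x = Inl 1 \<or> x = Inl (-1) \<or> (\<exists>i<n. x = Inr i)"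
  unfolding XC2L_def by auto

lemma Inl_mem: "Inl z \<in> XC2L n \<longleftrightarrow> z = 1 \<or> z = -1"
  unfolding XC2L_def by auto

lemma Inr_mem: "Inr i \<in> XC2L n \<longleftrightarrow> i < n"
  unfolding XC2L_def by auto

lemma XC2L_nonempty: "XC2L n \<noteq> {}"
  unfolding XC2L_def by auto

lemma XC2L_finite: "finite (XC2L n)"
  unfolding XC2L_def by auto

lemma opC2L_closed: "\<forall>x\<in>XC2L n. \<forall>y\<in>XC2L n. opC2L x y \<in> XC2L n"
proof (intro ballI)
  fix x y
  assume "x \<in> XC2L n" "y \<in> XC2L n"
  then show "opC2L x y \<in> XC2L n"
    by (cases x; cases y) (auto simp: Inl_mem Inr_mem)
qed

lemma opC2L_assoc: "opC2L (opC2L x y) z = opC2L x (opC2L y z)"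
  by (cases x; cases y; cases z) (auto simp: min.assoc)

lemma opC2L_comm: "opC2L x y = opC2L y x"
  by (cases x; cases y) (auto simp: min.commute)

text \<open>For a maximal linked family A \<noteq> <-1> and z \<in> C_2, the fibre of z over C
  is in A iff z \<in> C: it contains X - {-1} if z \<in> C and is contained in {-1} otherwise.\<close>
lemma lfibre_Inl_mem_iff:
  assumes ml: "maximal_linked (XC2L n) AA" and ne: "AA \<noteq> principal (XC2L n) (Inl (-1))"
    and z: "Inl z \<in> XC2L n"
  shows "lfibre (XC2L n) opC2L (Inl z) C \<in> AA \<longleftrightarrow> Inl z \<in> C"
proof
  have a: "Inl (-1) \<in> XC2L n"
    by (simp add: Inl_mem)
  note co = ml_co_singleton[OF ml a ne]
  assume fib: "lfibre (XC2L n) opC2L (Inl z) C \<in> AA"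
  show "Inl z \<in> C"
  proof (rule ccontr)
    assume "Inl z \<notin> C"
    then have "lfibre (XC2L n) opC2L (Inl z) C \<subseteq> {Inl (-1)}"
      using z unfolding lfibre_def by (auto simp: XC2L_mem)
    then show False
      using up_mono[OF ml_up[OF ml] fib] a co(1) by blast
  qed
next
  assume "Inl z \<in> C"
  then have "XC2L n - {Inl (-1)} \<subseteq> lfibre (XC2L n) opC2L (Inl z) C"
    using z unfolding lfibre_def by (auto simp: XC2L_mem)
  then show "lfibre (XC2L n) opC2L (Inl z) C \<in> AA"
    using up_mono[OF ml_up[OF ml] ml_co_singleton(2)[OF ml _ ne] _ lfibre_sub] Inl_mem by blast
qed

text \<open>Multiplying by an element i \<in> L_n of C fixes C pointwise or lands on min i j \<in> {i, j}.\<close>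
lemma Inr_lfibre_self:
  assumes "Inr i \<in> C" "C \<subseteq> XC2L n"
  shows "C \<subseteq> lfibre (XC2L n) opC2L (Inr i) C"
proof
  fix y
  assume "y \<in> C"
  then show "y \<in> lfibre (XC2L n) opC2L (Inr i) C"
    using assms unfolding lfibre_def by (cases y) (auto simp: min_def)
qed

text \<open>Every A \<noteq> <-1> is idempotent: A \<subseteq> A * A, and A is maximal.\<close>
lemma idempotent:
  assumes ml: "maximal_linked (XC2L n) AA" and ne: "AA \<noteq> principal (XC2L n) (Inl (-1))"
  shows "ext_op (XC2L n) opC2L AA AA = AA"
proof -
  have up: "upfamily (XC2L n) AA"
    using ml by (rule ml_up)
  have "C \<in> ext_op (XC2L n) opC2L AA AA" if C: "C \<in> AA" for C
  proof -
    have CX: "C \<subseteq> XC2L n"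
      using up_sub[OF up C] .
    have "x \<in> XC2L n \<and> lfibre (XC2L n) opC2L x C \<in> AA" if x: "x \<in> C" for x
    proof (cases x)
      case (Inl z)
      then show ?thesis
        using lfibre_Inl_mem_iff[OF ml ne] x CX by blast
    next
      case (Inr i)
      then show ?thesis
        using up_mono[OF up C Inr_lfibre_self lfibre_sub] x CX by blast
    qed
    then have "C \<subseteq> {x\<in>XC2L n. lfibre (XC2L n) opC2L x C \<in> AA}"
      by blast
    then show ?thesis
      using up_mono[OF up C] ext_op_char[OF up up] CX by blast
  qed
  moreover have sq: "maximal_linked (XC2L n) (ext_op (XC2L n) opC2L AA AA)"
    using ext_op_ml[OF ml ml XC2L_nonempty opC2L_closed] .
  ultimately show ?thesis
    using ml_max[OF ml ml_up[OF sq] ml_linked[OF sq]] by blast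
qed

text \<open>Take the least element of L outside K, or max L if L \<subseteq> K.\<close>
lemma min_witness:
  fixes L K :: "nat set"
  assumes fin: "finite L" and ne: "L \<noteq> {}"
  shows "\<exists>l\<in>L. \<forall>b. min l b \<in> K \<longrightarrow> (\<forall>a\<in>L. min a b \<in> K)"
proof (cases "L \<subseteq> K")
  case True
  have "min a b \<in> K" if "min (Max L) b \<in> K" "a \<in> L" for a b
    using that True Max_ge[OF fin, of a] by (auto simp: min_def split: if_splits)
  then show ?thesis
    using Max_in[OF fin ne] by blast
next
  case False
  let ?l = "Min (L - K)"
  have fin': "finite (L - K)" and ne': "L - K \<noteq> {}"
    using fin False by auto
  have "min a b \<in> K" if h: "min ?l b \<in> K" and a: "a \<in> L" for a b
  proof -
    have "b < ?l" and "b \<in> K"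
      using h Min_in[OF fin' ne'] by (auto simp: min_def split: if_splits)
    moreover have "a \<in> K" if "a < ?l"
      using that a Min_le[OF fin', of a] by fastforce
    ultimately show ?thesis
      by (auto simp: min_def)
  qed
  then show ?thesis
    using Min_in[OF fin' ne'] by blast
qed

text \<open>For C \<in> A * B let
  T = {x. fibre of x over C \<in> B} \<in> A and S = {y. fibre of y over C \<in> A}; we must
  show S \<in> B.  On C_2 both T and S agree with C.  An element j \<in> L_n lies in S as
  soon as min j i \<in> C for all i \<in> T \<inter> L_n, and min_witness produces a member of B
  all of whose points are of this kind.\<close>
lemma ext_op_sub_swap:
  assumes mlA: "maximal_linked (XC2L n) AA" and neA: "AA \<noteq> principal (XC2L n) (Inl (-1))"
    and mlB: "maximal_linked (XC2L n) BB" and neB: "BB \<noteq> principal (XC2L n) (Inl (-1))"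
    and C: "C \<in> ext_op (XC2L n) opC2L AA BB"
  shows "C \<in> ext_op (XC2L n) opC2L BB AA"
proof -
  let ?X = "XC2L n"
  let ?T = "{x\<in>?X. lfibre ?X opC2L x C \<in> BB}"
  let ?S = "{y\<in>?X. lfibre ?X opC2L y C \<in> AA}"
  define L where "L = {i. Inr i \<in> ?T}"
  define K where "K = {i. Inr i \<in> C}"
  have upA: "upfamily ?X AA" and upB: "upfamily ?X BB"
    using mlA mlB by (auto dest: ml_up)
  have CX: "C \<subseteq> ?X" and TA: "?T \<in> AA"
    using C ext_op_char[OF upA upB] by auto
  have T_Inl: "Inl z \<in> C" if "Inl z \<in> ?T" for z
    using lfibre_Inl_mem_iff[OF mlB neB] that by blast
  have S_Inl: "Inl z \<in> ?S" if "Inl z \<in> ?X" "Inl z \<in> C" for z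
    using lfibre_Inl_mem_iff[OF mlA neA] that by blast
  have S_Inr: "Inr j \<in> ?S" if j: "j < n" and h: "\<forall>i\<in>L. min j i \<in> K" for j
  proof -
    have "?T \<subseteq> lfibre ?X opC2L (Inr j) C"
    proof
      fix x
      assume x: "x \<in> ?T"
      then show "x \<in> lfibre ?X opC2L (Inr j) C"
        using T_Inl h unfolding L_def K_def lfibre_def by (cases x) auto
    qed
    then show ?thesis
      using up_mono[OF upA TA _ lfibre_sub] j Inr_mem by blast
  qed
  have "\<exists>W\<in>BB. W \<subseteq> ?S"
  proof (cases "L = {}")
    case True
    text \<open>Then T \<subseteq> C_2, and T \<notin> {-1} forces 1 \<in> T \<inter> C.\<close>
    have "Inl 1 \<in> ?T"
    proof (rule ccontr)
      assume "Inl 1 \<notin> ?T"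
      then have "?T \<subseteq> {Inl (-1)}"
        using True unfolding L_def by (auto simp: XC2L_mem)
      then show False
        using up_mono[OF upA TA] ml_co_singleton(1)[OF mlA _ neA] Inl_mem by blast
    qed
    then have "?X - {Inl (-1)} \<subseteq> ?S"
      using T_Inl S_Inl S_Inr True by (auto simp: XC2L_mem)
    then show ?thesis
      using ml_co_singleton(2)[OF mlB _ neB] Inl_mem by blast
  next
    case False
    have "finite L"
      using finite_subset[of L "{..<n}"] Inr_mem unfolding L_def by blast
    then obtain l where l: "l \<in> L" "\<forall>b. min l b \<in> K \<longrightarrow> (\<forall>a\<in>L. min a b \<in> K)"
      using min_witness[OF _ False] by blast
    have "lfibre ?X opC2L (Inr l) C \<subseteq> ?S"
    proof
      fix y
      assume y: "y \<in> lfibre ?X opC2L (Inr l) C"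
      show "y \<in> ?S"
      proof (cases y)
        case (Inl z)
        then show ?thesis
          using S_Inl y unfolding lfibre_def by simp
      next
        case (Inr j)
        then have "min l j \<in> K"
          using y unfolding lfibre_def K_def by simp
        then have "\<forall>a\<in>L. min j a \<in> K"
          using l(2) by (metis min.commute)
        then show ?thesis
          using S_Inr y Inr Inr_mem unfolding lfibre_def by blast
      qed
    qed
    then show ?thesis
      using l(1) unfolding L_def by blast
  qed
  then have "?S \<in> BB"
    using up_mono[OF upB] by blast
  then show ?thesis
    using ext_op_char[OF upB upA] CX by blast
qed

lemma absorbs_generator:
  assumes ml: "maximal_linked (XC2L n) EE" and ne: "EE \<noteq> principal (XC2L n) (Inl (-1))"
  shows "ext_op (XC2L n) opC2L EE (principal (XC2L n) (Inl (-1))) = principal (XC2L n) (Inl (-1))"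
proof (rule set_eqI)
  fix C
  have a: "Inl (-1) \<in> XC2L n"
    by (simp add: Inl_mem)
  have "{y\<in>XC2L n. opC2L y (Inl (-1)) \<in> C} = lfibre (XC2L n) opC2L (Inl (-1)) C"
    unfolding lfibre_def by (simp add: opC2L_comm)
  then show "C \<in> ext_op (XC2L n) opC2L EE (principal (XC2L n) (Inl (-1))) \<longleftrightarrow>
      C \<in> principal (XC2L n) (Inl (-1))"
    using ext_op_principal_right[OF ml_up[OF ml] a] lfibre_Inl_mem_iff[OF ml ne a]
    unfolding principal_def by auto
qed


text \<open>lambda(C_2 \<sqcup> L_n) is commutative: products involving <-1> commute since
  <-1> is principal and the operation is commutative; otherwise A * B \<subseteq> B * A
  is an inclusion of maximal linked families, hence an equality.\<close>
lemma ext_op_C2L_comm: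
  assumes mlA: "maximal_linked (XC2L n) AA" and mlB: "maximal_linked (XC2L n) BB"
  shows "ext_op (XC2L n) opC2L AA BB = ext_op (XC2L n) opC2L BB AA"
proof (cases "AA = principal (XC2L n) (Inl (-1)) \<or> BB = principal (XC2L n) (Inl (-1))")
  case True
  have a: "Inl (-1) \<in> XC2L n" and comm: "\<forall>u\<in>XC2L n. \<forall>v\<in>XC2L n. opC2L u v = opC2L v u"
    by (simp_all add: Inl_mem opC2L_comm)
  show ?thesis
    using True principal_comm[OF ml_up[OF mlA] a comm] principal_comm[OF ml_up[OF mlB] a comm]
    by auto
next
  case False
  have "ext_op (XC2L n) opC2L AA BB \<subseteq> ext_op (XC2L n) opC2L BB AA"
    using ext_op_sub_swap[OF mlA _ mlB] False by blast
  moreover have "maximal_linked (XC2L n) (ext_op (XC2L n) opC2L AA BB)"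
    and "maximal_linked (XC2L n) (ext_op (XC2L n) opC2L BB AA)"
    using ext_op_ml[OF _ _ XC2L_nonempty opC2L_closed] mlA mlB by blast+
  ultimately show ?thesis
    using ml_max[OF _ ml_up ml_linked] by metis
qed

lemma generator_square:
  "ext_op (XC2L n) opC2L (principal (XC2L n) (Inl (-1))) (principal (XC2L n) (Inl (-1)))
     = principal (XC2L n) (Inl 1)"
  using principal_mult[where f = opC2L] by (simp add: Inl_mem)

lemma identity_times_generator:
  "ext_op (XC2L n) opC2L (principal (XC2L n) (Inl 1)) (principal (XC2L n) (Inl (-1)))
     = principal (XC2L n) (Inl (-1))"
  using principal_mult[where f = opC2L] by (simp add: Inl_mem)

lemma identity_ne_generator: "principal (XC2L n) (Inl 1) \<noteq> principal (XC2L n) (Inl (-1))"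
proof -
  have "{Inl 1} \<in> principal (XC2L n) (Inl 1)" "{Inl 1} \<notin> principal (XC2L n) (Inl (-1))"
    unfolding principal_def by (auto simp: Inl_mem)
  then show ?thesis
    by metis
qed

lemma idempotent_iff:
  assumes "maximal_linked (XC2L n) EE"
  shows "ext_op (XC2L n) opC2L EE EE = EE \<longleftrightarrow> EE \<noteq> principal (XC2L n) (Inl (-1))"
  using idempotent[OF assms] generator_square identity_ne_generator by auto


lemma lam_iff: "AA \<in> lam X \<longleftrightarrow> maximal_linked X AA"
  unfolding lam_def by simp

theorem proposition4p3:
  fixes n :: nat
  defines "X \<equiv> XC2L n"
      and "mul \<equiv> ext_op (XC2L n) opC2L"
      and "a \<equiv> principal (XC2L n) (Inl (-1))"
  shows "finite (lam X)
    \<and> (\<forall>\<A>\<in>lam X. \<forall>\<B>\<in>lam X. mul \<A> \<B> \<in> lam X)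
    \<and> (\<forall>\<A>\<in>lam X. \<forall>\<B>\<in>lam X. \<forall>\<C>\<in>lam X. mul (mul \<A> \<B>) \<C> = mul \<A> (mul \<B> \<C>))
    \<and> (\<forall>\<A>\<in>lam X. \<forall>\<B>\<in>lam X. mul \<A> \<B> = mul \<B> \<A>)
    \<and> (\<forall>\<A>\<in>lam X. mul (mul \<A> \<A>) \<A> = \<A>)
    \<and> {\<E>\<in>lam X. mul \<E> \<E> = \<E>} = lam X - {a}
    \<and> (\<forall>\<E>\<in>lam X. mul \<E> \<E> = \<E> \<longrightarrow> mul \<E> a = a)"
proof -
  have finite: "finite (lam X)"
    unfolding X_def using XC2L_finite by (rule finite_lam)
  have closed: "mul A B \<in> lam X" if "A \<in> lam X" "B \<in> lam X" for A B
    using ext_op_ml[OF that[unfolded lam_iff X_def] XC2L_nonempty opC2L_closed]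
    unfolding lam_iff X_def mul_def .
  have assoc: "mul (mul A B) C = mul A (mul B C)" if "A \<in> lam X" "B \<in> lam X" "C \<in> lam X"
    for A B C
    using ext_op_assoc[OF ml_up ml_up ml_up, OF that[unfolded lam_iff X_def] opC2L_closed]
    unfolding mul_def by (simp add: opC2L_assoc)
  have comm: "mul A B = mul B A" if "A \<in> lam X" "B \<in> lam X" for A B
    using ext_op_C2L_comm[OF that[unfolded lam_iff X_def]] unfolding mul_def .
  have idempotents: "mul E E = E \<longleftrightarrow> E \<noteq> a" if "E \<in> lam X" for E
    using idempotent_iff[OF that[unfolded lam_iff X_def]] unfolding mul_def a_def .
  have boolean: "mul (mul A A) A = A" if "A \<in> lam X" for A
    using idempotents[OF that] identity_times_generator generator_square
    unfolding mul_def a_def by (cases "A = a") (auto simp: a_def)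
  have absorbs: "mul E a = a" if "E \<in> lam X" "mul E E = E" for E
    using absorbs_generator[OF that(1)[unfolded lam_iff X_def]] idempotents[OF that(1)] that(2)
    unfolding mul_def a_def by simp
  have idempotent_set: "{E\<in>lam X. mul E E = E} = lam X - {a}"
    using idempotents by blast
  show ?thesis
    using finite idempotent_set closed comm assoc boolean absorbs
    by (intro conjI ballI impI) assumption+
qed

end
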